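(* Let $u=u_1\cdots u_k$ be a nondecreasing word of length $k\ge1$ with letters in $\{1,\dots,r\}$, and let $I=(i_1,\dots,i_r)$ be a composition of length $r$ of an integer $n\ge k$. Then there exists at most one nondecreasing word $v$ with letters in $\{1,\dots,r\}$ such that $uv$ is packed and $\mathrm{WC}(uv)=I$, and such a $v$ exists if and only if $u_i<u_{i+1}$ for every $i\in\mathrm{Des}(I)$ with $i\le k-1$. In that case, writing $y=y_1y_2\cdots y_n=1^{i_1}2^{i_2}\cdots r^{i_r}$, \[ \mathrm{sinv}(uv)=\sum_{i=1}^k(u_i-y_i)=\sum_{i=1}^k u_i-\bigl(k+\mathrm{maj}(\bar K)\bigr), \] where $K$ is the composition of $k$ with $\mathrm{Des}(K)=\mathrm{Des}(I)\cap[1,k-1]$.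
   Context: A composition $I=(i_1,\dots,i_r)$ of $n$ has $\mathrm{Des}(I)=\{i_1,\dots,i_1+\dots+i_{r-1}\}$; $\bar K$ is the reverse of $K$; for $K=(k_1,\dots,k_s)$, $\mathrm{maj}(K)=\sum_{t=1}^s(s-t)k_t$. $a^{b}$ denotes the letter $a$ repeated $b$ times. A packed word is a word whose set of letters is $\{1,\dots,m\}$ for some $m$. For a packed word $w=w_1\cdots w_n$: $\mathrm{WC}(w)$ is the composition of $n$ whose descent set is the set of positions $p<n$ such that $w_p$ does not occur in $w_{p+1}\cdots w_n$; $\mathrm{sinv}(w)$ is the number of pairs $i<j$ with $w_i>w_j$ and $w_j$ not occurring in $w_{j+1}\cdots w_n$. *)

theory Defs
  imports Main
begin

text \<open>Words are lists of positive naturals; positions are 1-indexed in the paper,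
  0-indexed in lists.\<close>

definition packed :: "nat list \<Rightarrow> bool" where
  "packed w \<longleftrightarrow> (\<exists>m. set w = {1..m})"

definition is_composition :: "nat list \<Rightarrow> nat \<Rightarrow> bool" where
  "is_composition I n \<longleftrightarrow> (\<forall>x\<in>set I. x > 0) \<and> sum_list I = n"

definition Des :: "nat list \<Rightarrow> nat set" where
  "Des I = {sum_list (take j I) | j. 1 \<le> j \<and> j < length I}"

text \<open>The composition of n (n >= 1) whose descent set is D (a subset of {1..n-1}).\<close>
definition comp_of_des :: "nat \<Rightarrow> nat set \<Rightarrow> nat list" where
  "comp_of_des n D =
     (let ps = 0 # sorted_list_of_set (D \<inter> {1..<n}) @ [n]
      in map (\<lambda>i. ps ! (Suc i) - ps ! i) [0..<length ps - 1])"

definition WC :: "nat list \<Rightarrow> nat list" where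
  "WC w = comp_of_des (length w)
            {p. 1 \<le> p \<and> p < length w \<and> w ! (p - 1) \<notin> set (drop p w)}"

definition sinv :: "nat list \<Rightarrow> nat" where
  "sinv w = card {(i, j). i < j \<and> j < length w \<and> w ! i > w ! j
                          \<and> w ! j \<notin> set (drop (Suc j) w)}"

definition maj :: "nat list \<Rightarrow> nat" where
  "maj K = (\<Sum>t<length K. (length K - 1 - t) * K ! t)"

definition ywords :: "nat list \<Rightarrow> nat list" where
  "ywords I = concat (map (\<lambda>j. replicate (I ! j) (Suc j)) [0..<length I])"

end

theory Submission
  imports Defs
begin

text \<open>A position q of a word w is a last occurrence if w_q does not reappear to its right. The
  descents of WC(w) are the successors of the non-final last occurrences, and the last occurrences
  are in bijection with the letters of w. In a nondecreasing word the last occurrences are exactly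
  the ascents and the final position, so a nondecreasing suffix v of uv is determined by its letters
  (those of uv whose last occurrence is not inside u) and its last occurrences: this gives
  uniqueness. Conversely, v can be built from the prescribed last occurrences, and the only
  obstruction is a prescribed last occurrence inside u that is followed by the same letter of u.
  Since v is nondecreasing, every pair counted by sinv(uv) starts in u; those starting at i are the
  last occurrences of the u_i - 1 smaller letters, minus the last occurrences before i, and there are
  y_i - 1 of the latter.\<close>

lemma sum_list_take_less:
  assumes "\<forall>x\<in>set I. x > 0" "j < j'" "j' \<le> length I"
  shows "sum_list (take j I) < sum_list (take j' (I :: nat list))"
proof -
  have split: "take j' I = take j I @ take (j' - j) (drop j I)"
    using assms by (metis le_add_diff_inverse less_imp_le take_add)
  have "take (j' - j) (drop j I) \<noteq> []" using assms by simp
  then obtain x where x: "x \<in> set (take (j' - j) (drop j I))" by (meson list.set_sel(1))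
  then have "x > 0" using assms by (meson in_set_dropD in_set_takeD)
  moreover have "x \<le> sum_list (take (j' - j) (drop j I))" using x member_le_sum_list by blast
  ultimately show ?thesis by (subst split) simp
qed

lemma Des_eq_image: "Des I = (\<lambda>j. sum_list (take j I)) ` {1..<length I}"
  unfolding Des_def by auto

lemma card_Des:
  assumes "\<forall>x\<in>set I. x > 0"
  shows "card (Des I) = length I - 1"
proof -
  have "strict_mono_on {1..<length I} (\<lambda>j. sum_list (take j I))"
    by (rule strict_mono_onI) (use sum_list_take_less[OF assms] in auto)
  then show ?thesis by (simp add: Des_eq_image card_image strict_mono_on_imp_inj_on)
qed

lemma Des_subset:
  assumes "\<forall>x\<in>set I. x > 0"
  shows "Des I \<subseteq> {1..<sum_list I}"
proof
  fix d assume "d \<in> Des I"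
  then obtain j where j: "1 \<le> j" "j < length I" "d = sum_list (take j I)" unfolding Des_def by auto
  have "sum_list (take 0 I) < d" using sum_list_take_less[OF assms, of 0 j] j by simp
  moreover have "d < sum_list (take (length I) I)"
    using sum_list_take_less[OF assms, of j "length I"] j by simp
  ultimately show "d \<in> {1..<sum_list I}" by simp
qed

lemma sum_list_take_diffs:
  fixes ps :: "nat list"
  assumes "sorted ps" "j < length ps"
  shows "sum_list (take j (map (\<lambda>i. ps ! Suc i - ps ! i) [0..<length ps - 1])) = ps ! j - ps ! 0"
  using assms(2)
proof (induction j)
  case 0 then show ?case by simp
next
  case (Suc j)
  have "ps ! 0 \<le> ps ! j" "ps ! j \<le> ps ! Suc j" using assms(1) Suc.prems by (auto simp: sorted_iff_nth_mono)
  moreover have "take (Suc j) (map (\<lambda>i. ps ! Suc i - ps ! i) [0..<length ps - 1])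
     = take j (map (\<lambda>i. ps ! Suc i - ps ! i) [0..<length ps - 1]) @ [ps ! Suc j - ps ! j]"
    using Suc.prems by (simp add: take_Suc_conv_app_nth del: upt_Suc)
      (metis One_nat_def Suc_lessE diff_Suc_1 less_SucI nth_upt plus_nat.add_0)
  ultimately show ?case using Suc by simp
qed

lemma comp_of_des_correct:
  assumes "D \<subseteq> {1..<n}" "n \<ge> 1"
  shows "sum_list (comp_of_des n D) = n" "Des (comp_of_des n D) = D"
    "\<forall>x\<in>set (comp_of_des n D). x > 0"
proof -
  define xs where "xs = sorted_list_of_set D"
  define ps where "ps = 0 # xs @ [n]"
  have "finite D" using assms finite_subset by blast
  then have D_set: "sorted_wrt (<) xs" "set xs = D" by (auto simp: xs_def)
  have ps_strict: "sorted_wrt (<) ps" unfolding ps_def using D_set assms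
    by (auto simp: sorted_wrt_append)
  then have ps_sorted: "sorted ps" by (simp add: strict_sorted_iff)
  have comp: "comp_of_des n D = map (\<lambda>i. ps ! Suc i - ps ! i) [0..<length ps - 1]"
    using assms unfolding comp_of_des_def ps_def xs_def Let_def by (simp add: Int_absorb2)
  have partial_sums: "sum_list (take j (comp_of_des n D)) = ps ! j" if "j < length ps" for j
    using sum_list_take_diffs[OF ps_sorted that] by (simp add: comp ps_def)
  have "sum_list (comp_of_des n D) = sum_list (take (length ps - 1) (comp_of_des n D))"
    by (simp add: comp)
  then show "sum_list (comp_of_des n D) = n"
    using partial_sums[of "length ps - 1"] by (simp add: ps_def nth_append)
  show "\<forall>x\<in>set (comp_of_des n D). x > 0"
    using sorted_wrt_nth_less[OF ps_strict] by (auto simp: comp)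
  have "length (comp_of_des n D) = length xs + 1" by (simp add: comp ps_def)
  then have "Des (comp_of_des n D) = (\<lambda>j. ps ! j) ` {Suc 0..<Suc (length xs)}"
    unfolding Des_eq_image by (intro image_cong) (simp_all add: partial_sums ps_def)
  also have "\<dots> = (\<lambda>j. ps ! j) ` Suc ` {0..<length xs}" by simp
  also have "\<dots> = (\<lambda>j. xs ! j) ` {0..<length xs}"
    unfolding image_image by (intro image_cong) (simp_all add: ps_def nth_append)
  also have "\<dots> = D" using D_set by (auto simp: in_set_conv_nth)
  finally show "Des (comp_of_des n D) = D" .
qed

lemma comp_of_des_Des:
  assumes "is_composition I n" "n \<ge> 1"
  shows "comp_of_des n (Des I) = I"
proof -
  have pos: "\<forall>x\<in>set I. x > 0" and sum: "sum_list I = n" using assms by (auto simp: is_composition_def)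
  define P where "P j = sum_list (take j I)" for j
  define ds where "ds = map P [1..<length I]"
  have "sorted_wrt (<) ds"
    unfolding ds_def sorted_wrt_map
    by (auto simp: sorted_wrt_iff_nth_less P_def intro!: sum_list_take_less[OF pos])
  then have "sorted_list_of_set (set ds) = ds"
    by (simp add: sorted_list_of_set_sort_remdups strict_sorted_iff distinct_remdups_id sorted_sort_id)
  moreover have "set ds = Des I" by (auto simp: Des_eq_image P_def ds_def)
  ultimately have sorted_Des: "sorted_list_of_set (Des I) = map P [1..<length I]" by (simp add: ds_def)
  have "Des I \<inter> {1..<n} = Des I" using Des_subset[OF pos] sum by auto
  moreover have "0 # map P [1..<length I] @ [n] = map P [0..<Suc (length I)]"
  proof -
    have "length I \<ge> 1" using sum assms(2) by (cases I) auto
    then show ?thesis using sum by (simp add: P_def upt_conv_Cons del: upt_Suc) (simp add: upt_Suc P_def)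
  qed
  ultimately have ps: "0 # sorted_list_of_set (Des I \<inter> {1..<n}) @ [n] = map P [0..<Suc (length I)]"
    using sorted_Des by simp
  have "P (Suc i) - P i = I ! i" if "i < length I" for i
    using that by (simp add: P_def take_Suc_conv_app_nth)
  then show ?thesis unfolding comp_of_des_def ps Let_def
    by (intro nth_equalityI) (simp_all del: upt_Suc add: nth_map_upt)
qed

lemma ywords_snoc: "ywords (I @ [x]) = ywords I @ replicate x (Suc (length I))"
proof -
  have "map (\<lambda>j. replicate ((I @ [x]) ! j) (Suc j)) [0..<length I]
      = map (\<lambda>j. replicate (I ! j) (Suc j)) [0..<length I]"
    (is "?a = ?b") by (intro map_cong) (auto simp: nth_append)
  have "ywords (I @ [x]) = concat ?a @ replicate x (Suc (length I))" by (simp add: ywords_def)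
  then show ?thesis by (simp only: \<open>?a = ?b\<close>) (simp add: ywords_def)
qed

lemma length_ywords: "length (ywords I) = sum_list I"
  by (induction I rule: rev_induct) (simp_all add: ywords_snoc, simp add: ywords_def)

lemma Des_snoc: "Des (I @ [x]) = (if I = [] then {} else insert (sum_list I) (Des I))"
proof -
  have "Des (I @ [x]) = (\<lambda>j. sum_list (take j I)) ` {1..<Suc (length I)}"
    unfolding Des_eq_image by (intro image_cong) auto
  then show ?thesis by (auto simp: Des_eq_image atLeastLessThanSuc Suc_le_eq)
qed

lemma ywords_nth:
  assumes "\<forall>x\<in>set I. x > 0" "i < sum_list I"
  shows "ywords I ! i = Suc (card {d \<in> Des I. d \<le> i})"
  using assms
proof (induction I rule: rev_induct)
  case Nil then show ?case by simp
next
  case (snoc x I)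
  have pos: "\<forall>x\<in>set I. x > 0" using snoc.prems by auto
  show ?case
  proof (cases "i < sum_list I")
    case True
    then have "{d \<in> Des (I @ [x]). d \<le> i} = {d \<in> Des I. d \<le> i}" by (auto simp: Des_snoc)
    then show ?thesis using snoc.IH[OF pos True] True by (simp add: ywords_snoc nth_append length_ywords)
  next
    case False
    have "Des (I @ [x]) \<subseteq> {..i}" using Des_subset[OF pos] False by (auto simp: Des_snoc)
    then have "{d \<in> Des (I @ [x]). d \<le> i} = Des (I @ [x])" by auto
    then have "card {d \<in> Des (I @ [x]). d \<le> i} = length I"
      using card_Des[OF snoc.prems(1)] by simp
    then show ?thesis using False snoc.prems by (simp add: ywords_snoc nth_append length_ywords)
  qed
qed

lemma maj_Cons: "maj (x # K) = length K * x + maj K"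
  unfolding maj_def by (simp del: sum.lessThan_Suc add: sum.lessThan_Suc_shift)

lemma sum_list_ywords: "sum_list (ywords K) = sum_list K + maj (rev K)"
  by (induction K rule: rev_induct)
    (auto simp: ywords_snoc maj_Cons sum_list_replicate, simp add: ywords_def maj_def)

definition last_occurrence :: "'a list \<Rightarrow> nat \<Rightarrow> bool" where
  "last_occurrence w q \<longleftrightarrow> w ! q \<notin> set (drop (Suc q) w)"

lemma last_occurrence_iff:
  "last_occurrence w q \<longleftrightarrow> (\<forall>t. q < t \<and> t < length w \<longrightarrow> w ! t \<noteq> w ! q)"
proof -
  have "w ! q \<in> set (drop (Suc q) w) \<longleftrightarrow> (\<exists>t. q < t \<and> t < length w \<and> w ! t = w ! q)"
  proof
    assume "w ! q \<in> set (drop (Suc q) w)"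
    then obtain i where "i < length w - Suc q" "w ! (Suc q + i) = w ! q" by (auto simp: in_set_conv_nth)
    then show "\<exists>t. q < t \<and> t < length w \<and> w ! t = w ! q" by (intro exI[of _ "Suc q + i"]) auto
  next
    assume "\<exists>t. q < t \<and> t < length w \<and> w ! t = w ! q"
    then obtain t where "q < t" "t < length w" "w ! t = w ! q" by blast
    then show "w ! q \<in> set (drop (Suc q) w)"
      unfolding in_set_conv_nth by (intro exI[of _ "t - Suc q"]) auto
  qed
  then show ?thesis unfolding last_occurrence_def by blast
qed

lemma last_occurrence_final: "Suc q = length w \<Longrightarrow> last_occurrence w q"
  by (simp add: last_occurrence_def)

lemma last_occurrence_Cons_0: "last_occurrence (a # w) 0 \<longleftrightarrow> a \<notin> set w"
  by (simp add: last_occurrence_def)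

lemma last_occurrence_Cons_Suc: "last_occurrence (a # w) (Suc q) \<longleftrightarrow> last_occurrence w q"
  by (simp add: last_occurrence_def)

lemma last_occurrence_append:
  "last_occurrence (u @ v) q \<longleftrightarrow>
     (if q < length u then last_occurrence u q \<and> u ! q \<notin> set v
      else last_occurrence v (q - length u))"
  by (auto simp: last_occurrence_def nth_append Suc_diff_le)

lemma last_occurrence_sorted:
  assumes "sorted w" "Suc q < length w"
  shows "last_occurrence w q \<longleftrightarrow> w ! q < w ! Suc q"
proof
  assume "last_occurrence w q"
  then have "w ! Suc q \<noteq> w ! q" using assms(2) by (auto simp: last_occurrence_iff)
  moreover have "w ! q \<le> w ! Suc q" using assms by (simp add: sorted_nth_mono)
  ultimately show "w ! q < w ! Suc q" by simp
next
  assume "w ! q < w ! Suc q"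
  moreover have "w ! Suc q \<le> w ! t" if "q < t" "t < length w" for t
    using assms that by (simp add: sorted_nth_mono)
  ultimately show "last_occurrence w q" unfolding last_occurrence_iff by fastforce
qed

lemma obtain_last_occurrence:
  assumes "a \<in> set w"
  obtains q where "q < length w" "w ! q = a" "last_occurrence w q"
proof -
  define A where "A = {p. p < length w \<and> w ! p = a}"
  have "finite A" "A \<noteq> {}" using assms by (auto simp: A_def in_set_conv_nth)
  then have max: "Max A \<in> A" "\<And>t. t \<in> A \<Longrightarrow> t \<le> Max A" by simp_all
  have "last_occurrence w (Max A)" unfolding last_occurrence_iff
  proof (intro allI impI)
    fix t assume "Max A < t \<and> t < length w"
    then show "w ! t \<noteq> w ! Max A" using max by (fastforce simp: A_def)
  qed
  with max show ?thesis by (intro that[of "Max A"]) (simp_all add: A_def)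
qed

lemma bij_betw_last_occurrences:
  "bij_betw (\<lambda>q. w ! q) {q. q < length w \<and> last_occurrence w q} (set w)"
proof (rule bij_betwI')
  fix x y assume "x \<in> {q. q < length w \<and> last_occurrence w q}" "y \<in> {q. q < length w \<and> last_occurrence w q}"
  then show "(w ! x = w ! y) = (x = y)"
    by (cases x y rule: linorder_cases) (auto simp: last_occurrence_iff)
next
  fix a assume "a \<in> set w"
  then show "\<exists>q\<in>{q. q < length w \<and> last_occurrence w q}. a = w ! q"
    by (metis (mono_tags) mem_Collect_eq obtain_last_occurrence)
qed simp

definition WC_des :: "'a list \<Rightarrow> nat set" where
  "WC_des w = {p. 1 \<le> p \<and> p < length w \<and> w ! (p - 1) \<notin> set (drop p w)}"

lemma WC_eq_comp_of_des: "WC w = comp_of_des (length w) (WC_des w)"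
  by (simp add: WC_def WC_des_def)

lemma WC_des_subset: "WC_des w \<subseteq> {1..<length w}"
  by (auto simp: WC_des_def)

lemma Suc_mem_WC_des: "Suc q \<in> WC_des w \<longleftrightarrow> Suc q < length w \<and> last_occurrence w q"
  by (simp add: WC_des_def last_occurrence_def)

lemma last_occurrence_iff_WC_des:
  "q < length w \<Longrightarrow> last_occurrence w q \<longleftrightarrow> Suc q \<in> insert (length w) (WC_des w)"
  using Suc_mem_WC_des[of q w] last_occurrence_final[of q w] by (metis Suc_lessI insert_iff)

lemma WC_des_eq_iff:
  assumes "D \<subseteq> {1..<length w}"
  shows "WC_des w = D \<longleftrightarrow> (\<forall>q<length w. last_occurrence w q \<longleftrightarrow> Suc q \<in> insert (length w) D)"
proof
  assume "WC_des w = D"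
  then show "\<forall>q<length w. last_occurrence w q \<longleftrightarrow> Suc q \<in> insert (length w) D"
    by (simp add: last_occurrence_iff_WC_des)
next
  assume last: "\<forall>q<length w. last_occurrence w q \<longleftrightarrow> Suc q \<in> insert (length w) D"
  show "WC_des w = D"
  proof (rule set_eqI)
    fix p show "p \<in> WC_des w \<longleftrightarrow> p \<in> D"
      using assms last Suc_mem_WC_des[of _ w] WC_des_subset[of w] by (cases p) auto
  qed
qed

lemma card_WC_des:
  assumes "w \<noteq> []"
  shows "card (WC_des w) = card (set w) - 1"
proof -
  let ?L = "{q. q < length w \<and> last_occurrence w q}"
  have "WC_des w = Suc ` (?L - {length w - 1})"
  proof (rule set_eqI)
    fix p show "p \<in> WC_des w \<longleftrightarrow> p \<in> Suc ` (?L - {length w - 1})"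
      using assms by (cases p) (auto simp: WC_des_def last_occurrence_def image_iff)
  qed
  moreover have "length w - 1 \<in> ?L" using assms by (simp add: last_occurrence_final)
  moreover have "card ?L = card (set w)" using bij_betw_same_card[OF bij_betw_last_occurrences] .
  ultimately show ?thesis by (simp add: card_image)
qed

lemma packed_WC_eq_iff:
  assumes "is_composition I n" "length I = r" "w \<noteq> []"
  shows "packed w \<and> WC w = I \<longleftrightarrow> length w = n \<and> set w = {1..r} \<and> WC_des w = Des I"
proof
  assume packed: "packed w \<and> WC w = I"
  have "length w \<ge> 1" using assms(3) by (cases w) auto
  note WC = comp_of_des_correct[OF WC_des_subset this, folded WC_eq_comp_of_des]
  have n: "length w = n" and des: "WC_des w = Des I"
    using WC packed assms(1) by (auto simp: is_composition_def)
  obtain m where m: "set w = {1..m}" using packed by (auto simp: packed_def)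
  have "m - 1 = r - 1"
    using card_WC_des[OF assms(3)] card_Des[of I] assms(1,2) des m by (simp add: is_composition_def)
  moreover have "m \<ge> 1" using m assms(3) by (cases "m = 0") auto
  moreover have "I \<noteq> []" using assms(1) n \<open>length w \<ge> 1\<close> by (auto simp: is_composition_def)
  then have "r \<ge> 1" using assms(2) by (cases I) auto
  ultimately show "length w = n \<and> set w = {1..r} \<and> WC_des w = Des I" using n des m by simp
next
  assume "length w = n \<and> set w = {1..r} \<and> WC_des w = Des I"
  moreover have "n \<ge> 1" using calculation assms(3) by (cases w) auto
  ultimately show "packed w \<and> WC w = I"
    using comp_of_des_Des[OF assms(1)] by (auto simp: packed_def WC_eq_comp_of_des)
qed

lemma sorted_eq_if_last_occurrences_eq:
  fixes v1 v2 :: "'a :: linorder list"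
  assumes "sorted v1" "sorted v2" "length v1 = length v2" "set v1 = set v2"
    "\<forall>q<length v1. last_occurrence v1 q \<longleftrightarrow> last_occurrence v2 q"
  shows "v1 = v2"
  using assms
proof (induction v1 arbitrary: v2)
  case Nil then show ?case by simp
next
  case (Cons a x1)
  then obtain b x2 where v2: "v2 = b # x2" by (cases v2) auto
  have "a \<le> b" "b \<le> a" using Cons.prems v2 by (auto simp: set_eq_iff)
  then have ab: "a = b" by simp
  have "a \<in> set x1 \<longleftrightarrow> a \<in> set x2"
    using Cons.prems(5) by (auto simp: v2 ab last_occurrence_Cons_0)
  then have "set x1 = set x2" using Cons.prems(4) v2 ab by auto
  moreover have "\<forall>q<length x1. last_occurrence x1 q \<longleftrightarrow> last_occurrence x2 q"
    using Cons.prems(5) by (auto simp: v2 last_occurrence_Cons_Suc)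
  ultimately have "x1 = x2" using Cons.IH Cons.prems(1-3) v2 by simp
  then show ?case using v2 ab by simp
qed

lemma card_less_Suc_eq:
  "card {q \<in> F. q < Suc j} = card {q \<in> F. q < j} + (if j \<in> F then 1 else 0)"
proof -
  have "{q \<in> F. q < Suc j} = (if j \<in> F then insert j {q \<in> F. q < j} else {q \<in> F. q < j})"
    by (auto simp: less_Suc_eq)
  then show ?thesis by simp
qed

lemma card_less_attains:
  fixes F :: "nat set"
  assumes "t < card {q \<in> F. q < m}"
  shows "\<exists>j<m. card {q \<in> F. q < j} = t"
  using assms
proof (induction m)
  case (Suc m)
  show ?case
  proof (cases "t < card {q \<in> F. q < m}")
    case True then show ?thesis using Suc.IH less_SucI by blast
  next
    case False
    then have "t = card {q \<in> F. q < m}" using Suc.prems card_less_Suc_eq[of F m] by (simp split: if_splits)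
    then show ?thesis by blast
  qed
qed simp

lemma sorted_map_nth_mono:
  assumes "sorted cs" "mono f" "\<forall>j<m. f j < length cs"
  shows "sorted (map (\<lambda>j. cs ! f j) [0..<m])"
  unfolding sorted_iff_nth_mono using assms by (simp add: sorted_nth_mono monoD)

lemma last_occurrence_map_nth_mono:
  fixes cs :: "'a :: linorder list"
  assumes "sorted cs" "distinct cs" "mono f" "\<forall>j<m. f j < length cs" "Suc j < m"
  shows "last_occurrence (map (\<lambda>j. cs ! f j) [0..<m]) j \<longleftrightarrow> f j \<noteq> f (Suc j)"
proof -
  have "cs ! f j \<le> cs ! f (Suc j)" using assms by (simp add: sorted_nth_mono monoD)
  then have "last_occurrence (map (\<lambda>j. cs ! f j) [0..<m]) j \<longleftrightarrow> cs ! f j \<noteq> cs ! f (Suc j)"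
    using last_occurrence_sorted[OF sorted_map_nth_mono[OF assms(1,3,4)], of j] assms(5)
    by (auto simp: order_less_le)
  also have "\<dots> \<longleftrightarrow> f j \<noteq> f (Suc j)" using assms(2,4,5) by (simp add: nth_eq_iff_index_eq)
  finally show ?thesis .
qed

lemma sorted_with_last_occurrences_exists:
  fixes C :: "'a :: linorder set"
  assumes "finite C" "F \<subseteq> {..<m}" "card F = card C" "0 < m \<Longrightarrow> m - 1 \<in> F"
  obtains v where "sorted v" "length v = m" "set v = C" "\<forall>j<m. last_occurrence v j \<longleftrightarrow> j \<in> F"
proof -
  define cs where "cs = sorted_list_of_set C"
  have cs: "sorted cs" "distinct cs" "set cs = C" "length cs = card F"
    using assms(1,3) by (simp_all add: cs_def)
  \<comment> \<open>the j-th letter is the element of C indexed by the number of prescribed last occurrences before j\<close>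
  define cnt where "cnt j = card {q \<in> F. q < j}" for j
  have "mono cnt" unfolding cnt_def by (intro monoI card_mono) auto
  have "{q \<in> F. q < m} = F" using assms(2) by auto
  then have cnt_m: "cnt m = length cs" by (simp add: cnt_def cs(4))
  have cnt_less: "\<forall>j<m. cnt j < length cs"
  proof (intro allI impI)
    fix j assume "j < m"
    then have "m - 1 \<in> F" "\<not> m - 1 < j" using assms(4) by auto
    then have "{q \<in> F. q < j} \<subset> F" by blast
    moreover have "finite F" using assms(2) finite_subset by blast
    ultimately show "cnt j < length cs" using cs(4) by (simp add: cnt_def psubset_card_mono)
  qed
  define v where "v = map (\<lambda>j. cs ! cnt j) [0..<m]"
  show ?thesis
  proof
    show "sorted v" unfolding v_def using cs(1) \<open>mono cnt\<close> cnt_less by (rule sorted_map_nth_mono)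
    show "length v = m" by (simp add: v_def)
    show "set v = C"
    proof
      show "set v \<subseteq> C" using cnt_less cs(3) by (auto simp: v_def)
      show "C \<subseteq> set v"
      proof
        fix c assume "c \<in> C"
        then obtain t where "t < length cs" "c = cs ! t" using cs(3) by (auto simp: in_set_conv_nth)
        then show "c \<in> set v" using card_less_attains[of t F m] cnt_m by (auto simp: v_def cnt_def)
      qed
    qed
    show "\<forall>j<m. last_occurrence v j \<longleftrightarrow> j \<in> F"
    proof (intro allI impI)
      fix j assume "j < m"
      show "last_occurrence v j \<longleftrightarrow> j \<in> F"
      proof (cases "Suc j = m")
        case True
        then have "j = m - 1" by simp
        then show ?thesis using True assms(4) by (simp add: last_occurrence_final v_def)
      next
        case False
        then show ?thesis
          using last_occurrence_map_nth_mono[OF cs(1,2) \<open>mono cnt\<close> cnt_less, of j] \<open>j < m\<close>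
          by (simp add: v_def cnt_def card_less_Suc_eq)
      qed
    qed
  qed
qed

lemma set_suffix_eq:
  "set v = set (u @ v) - (\<lambda>q. u ! q) ` {q. q < length u \<and> last_occurrence (u @ v) q}"
proof
  show "set v \<subseteq> set (u @ v) - (\<lambda>q. u ! q) ` {q. q < length u \<and> last_occurrence (u @ v) q}"
    by (auto simp: last_occurrence_append)
  show "set (u @ v) - (\<lambda>q. u ! q) ` {q. q < length u \<and> last_occurrence (u @ v) q} \<subseteq> set v"
  proof
    fix a assume a: "a \<in> set (u @ v) - (\<lambda>q. u ! q) ` {q. q < length u \<and> last_occurrence (u @ v) q}"
    then have "a \<in> set (u @ v)" by blast
    then obtain q where q: "q < length (u @ v)" "(u @ v) ! q = a" "last_occurrence (u @ v) q"
      by (rule obtain_last_occurrence)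
    then have "\<not> q < length u" using a by (auto simp: nth_append)
    then show "a \<in> set v" using q by (auto simp: nth_append)
  qed
qed

lemma sorted_suffix_unique:
  assumes "sorted v1" "sorted v2" "length v1 = length v2" "set (u @ v1) = set (u @ v2)"
    "WC_des (u @ v1) = WC_des (u @ v2)"
  shows "v1 = v2"
proof -
  have last: "last_occurrence (u @ v1) q \<longleftrightarrow> last_occurrence (u @ v2) q" if "q < length (u @ v1)" for q
    using last_occurrence_iff_WC_des[of q "u @ v1"] last_occurrence_iff_WC_des[of q "u @ v2"]
      that assms(3,5) by simp
  have "(\<lambda>q. u ! q) ` {q. q < length u \<and> last_occurrence (u @ v1) q}
      = (\<lambda>q. u ! q) ` {q. q < length u \<and> last_occurrence (u @ v2) q}"
    using last by (intro arg_cong[where f = "image _"] Collect_cong) auto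
  then have "set v1 = set v2" using assms(4) set_suffix_eq[of v1 u] set_suffix_eq[of v2 u] by (simp only:)
  moreover have "\<forall>j<length v1. last_occurrence v1 j \<longleftrightarrow> last_occurrence v2 j"
  proof (intro allI impI)
    fix j assume "j < length v1"
    then show "last_occurrence v1 j \<longleftrightarrow> last_occurrence v2 j"
      using last[of "length u + j"] by (simp add: last_occurrence_append)
  qed
  ultimately show ?thesis by (intro sorted_eq_if_last_occurrences_eq assms(1-3))
qed

lemma sorted_prefix_ascends_at_WC_des:
  assumes "sorted u" "d \<in> WC_des (u @ v)" "d < length u"
  shows "u ! (d - 1) < u ! d"
proof -
  obtain q where q: "d = Suc q" using assms(2) WC_des_subset[of "u @ v"] by (cases d) auto
  then have "last_occurrence u q" using assms(2,3) by (simp add: Suc_mem_WC_des last_occurrence_append)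
  then show ?thesis using q assms(1,3) by (simp add: last_occurrence_sorted)
qed

lemma last_occurrence_prefix_iff:
  fixes u :: "'a :: order list"
  assumes ascend: "\<And>p t. p \<in> L \<Longrightarrow> p < t \<Longrightarrow> t < length u \<Longrightarrow> u ! p < u ! t"
    and letters: "\<And>a. a \<in> set u \<Longrightarrow> a \<in> set v \<longleftrightarrow> a \<notin> (\<lambda>p. u ! p) ` {p \<in> L. p < length u}"
    and q: "q < length u"
  shows "last_occurrence (u @ v) q \<longleftrightarrow> q \<in> L"
proof
  assume "last_occurrence (u @ v) q"
  then have last: "last_occurrence u q" "u ! q \<notin> set v" using q by (simp_all add: last_occurrence_append)
  then obtain p where p: "p \<in> L" "p < length u" "u ! p = u ! q" using letters[of "u ! q"] q by auto
  have "\<not> p < q" using ascend[of p q] p q by auto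
  moreover have "\<not> q < p" using last(1) p by (auto simp: last_occurrence_iff)
  ultimately show "q \<in> L" using p by simp
next
  assume "q \<in> L"
  then have "last_occurrence u q" using ascend q by (fastforce simp: last_occurrence_iff)
  moreover have "u ! q \<notin> set v" using letters[of "u ! q"] \<open>q \<in> L\<close> q by auto
  ultimately show "last_occurrence (u @ v) q" using q by (simp add: last_occurrence_append)
qed

lemma card_Suc_preimage:
  assumes "0 \<notin> A"
  shows "card {q. Suc q \<in> A} = card A"
proof -
  have "Suc ` {q. Suc q \<in> A} = A"
  proof (rule set_eqI)
    fix d show "d \<in> Suc ` {q. Suc q \<in> A} \<longleftrightarrow> d \<in> A" using assms by (cases d) auto
  qed
  then show ?thesis using card_image[of Suc "{q. Suc q \<in> A}"] by simp
qed

lemma card_shift_add_card_less: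
  fixes L :: "nat set"
  assumes "finite L"
  shows "card {j. k + j \<in> L} + card {q \<in> L. q < k} = card L"
proof -
  have "(+) k ` {j. k + j \<in> L} = {q \<in> L. k \<le> q}"
  proof (rule set_eqI)
    fix q show "q \<in> (+) k ` {j. k + j \<in> L} \<longleftrightarrow> q \<in> {q \<in> L. k \<le> q}"
      by (auto simp: image_iff intro: exI[of _ "q - k"])
  qed
  then have "card {j. k + j \<in> L} = card {q \<in> L. k \<le> q}"
    using card_image[of "(+) k" "{j. k + j \<in> L}"] by (simp add: inj_on_def)
  also have "card {q \<in> L. k \<le> q} + card {q \<in> L. q < k} = card ({q \<in> L. k \<le> q} \<union> {q \<in> L. q < k})"
    using assms by (intro card_Un_disjoint[symmetric]) auto
  also have "{q \<in> L. k \<le> q} \<union> {q \<in> L. q < k} = L" by auto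
  finally show ?thesis .
qed

lemma sorted_suffix_exists:
  assumes u: "sorted u" "u \<noteq> []" "set u \<subseteq> {1..r}"
    and D: "D \<subseteq> {1..<n}" "card D = r - 1" "length u \<le> n"
    and ascends: "\<forall>d\<in>D. d < length u \<longrightarrow> u ! (d - 1) < u ! d"
  obtains v where "sorted v" "length (u @ v) = n" "set (u @ v) = {1..r}" "WC_des (u @ v) = D"
proof -
  \<comment> \<open>L: the positions that must be last occurrences; U: the letters of u whose last occurrence
    must lie in u, so that the letters of v are the others; F: the positions that must be last
    occurrences in v\<close>
  define k where "k = length u"
  define L where "L = {q. Suc q \<in> insert n D}"
  define U where "U = (\<lambda>q. u ! q) ` {q \<in> L. q < k}"
  define F where "F = {j. k + j \<in> L}"
  have k: "1 \<le> k" "k \<le> n" using u(2) D(3) by (auto simp: k_def Suc_le_eq)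
  have L_less: "L \<subseteq> {..<n}" using D(1) by (auto simp: L_def)
  have "0 \<notin> insert n D" "finite D" "n \<notin> D" using D(1) k finite_subset by auto
  moreover have "r \<ge> 1" using u(2,3) by (cases u) auto
  ultimately have card_L: "card L = r"
    using D(2) card_Suc_preimage[of "insert n D"] by (simp add: L_def)
  have ascend: "u ! q < u ! t" if "q \<in> L" "q < t" "t < k" for q t
  proof -
    have "Suc q \<in> D" "Suc q < k" using that k by (auto simp: L_def)
    then have "u ! q < u ! Suc q" using ascends by (auto simp: k_def)
    also have "u ! Suc q \<le> u ! t" using u(1) that by (simp add: k_def sorted_nth_mono)
    finally show ?thesis .
  qed
  have "inj_on (\<lambda>q. u ! q) {q \<in> L. q < k}"
  proof (rule inj_onI)
    fix x y assume "x \<in> {q \<in> L. q < k}" "y \<in> {q \<in> L. q < k}" "u ! x = u ! y"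
    then show "x = y" using ascend[of x y] ascend[of y x] by (cases x y rule: linorder_cases) auto
  qed
  then have card_U: "card U = card {q \<in> L. q < k}" by (simp add: U_def card_image)
  have "finite L" using L_less finite_subset by blast
  then have "card F = card L - card {q \<in> L. q < k}"
    using card_shift_add_card_less[of L k] by (simp add: F_def)
  also have "\<dots> = card ({1..r} - U)"
    using card_L card_U u(3) by (simp add: card_Diff_subset U_def k_def image_subset_iff subset_eq)
  finally have card_F: "card F = card ({1..r} - U)" .
  have F_less: "F \<subseteq> {..<n - k}" and F_last: "0 < n - k \<Longrightarrow> n - k - 1 \<in> F"
    using L_less k by (auto simp: F_def L_def)
  obtain v where v: "sorted v" "length v = n - k" "set v = {1..r} - U"
      and v_last: "\<forall>j<n - k. last_occurrence v j \<longleftrightarrow> j \<in> F"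
    by (rule sorted_with_last_occurrences_exists[OF _ F_less card_F F_last]) simp_all
  have U_u: "U \<subseteq> set u" by (auto simp: U_def k_def)
  have "last_occurrence (u @ v) q \<longleftrightarrow> Suc q \<in> insert n D" if "q < n" for q
  proof (cases "q < k")
    case True
    have "last_occurrence (u @ v) q \<longleftrightarrow> q \<in> L"
      using ascend v(3) u(3) True by (intro last_occurrence_prefix_iff) (auto simp: U_def k_def)
    then show ?thesis by (simp add: L_def)
  next
    case False
    then show ?thesis using v_last that by (simp add: last_occurrence_append F_def L_def k_def)
  qed
  moreover have "length (u @ v) = n" using v(2) k by (simp add: k_def)
  ultimately have "WC_des (u @ v) = D" using D(1) by (simp add: WC_des_eq_iff)
  moreover have "set (u @ v) = {1..r}" using v(3) U_u u(3) by auto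
  ultimately show ?thesis using that v(1) \<open>length (u @ v) = n\<close> by blast
qed

lemma sinv_append_sorted:
  assumes "sorted v"
  shows "sinv (u @ v) = (\<Sum>i<length u. card {j. i < j \<and> j < length (u @ v) \<and> (u @ v) ! j < u ! i
                                               \<and> last_occurrence (u @ v) j})"
proof -
  let ?w = "u @ v"
  let ?T = "\<lambda>i. {j. i < j \<and> j < length ?w \<and> ?w ! j < u ! i \<and> last_occurrence ?w j}"
  have "\<not> ?w ! j < ?w ! i" if "length u \<le> i" "i < j" "j < length ?w" for i j
  proof -
    have "v ! (i - length u) \<le> v ! (j - length u)" using that by (intro sorted_nth_mono[OF assms]) auto
    then show ?thesis using that by (simp add: nth_append)
  qed
  then have "{(i, j). i < j \<and> j < length ?w \<and> ?w ! i > ?w ! j \<and> ?w ! j \<notin> set (drop (Suc j) ?w)}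
        = Sigma {..<length u} ?T"
    by (auto simp: last_occurrence_def nth_append split: if_splits) (metis not_le)
  then have "sinv ?w = card (Sigma {..<length u} ?T)" by (simp add: sinv_def)
  also have "\<dots> = (\<Sum>i<length u. card (?T i))" by (rule card_SigmaI) auto
  finally show ?thesis .
qed

lemma card_last_occurrences_below:
  "card {j. j < length w \<and> last_occurrence w j \<and> w ! j < a} = card {b \<in> set w. b < a}"
proof -
  let ?A = "{j. j < length w \<and> last_occurrence w j \<and> w ! j < a}"
  have "inj_on (\<lambda>q. w ! q) ?A"
    using bij_betw_imp_inj_on[OF bij_betw_last_occurrences] by (rule inj_on_subset) auto
  moreover have "(\<lambda>q. w ! q) ` ?A = {b \<in> set w. b < a}"
  proof
    show "(\<lambda>q. w ! q) ` ?A \<subseteq> {b \<in> set w. b < a}" by auto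
    show "{b \<in> set w. b < a} \<subseteq> (\<lambda>q. w ! q) ` ?A"
    proof
      fix b assume b: "b \<in> {b \<in> set w. b < a}"
      then obtain q where "q < length w" "w ! q = b" "last_occurrence w q"
        by (blast elim: obtain_last_occurrence)
      with b show "b \<in> (\<lambda>q. w ! q) ` ?A" by blast
    qed
  qed
  ultimately show ?thesis using card_image[of "\<lambda>q. w ! q" ?A] by simp
qed

lemma card_inversions_at:
  assumes "set w = {1..r}" "i < length w" "\<forall>j<i. w ! j \<le> w ! i"
  shows "card {j. i < j \<and> j < length w \<and> w ! j < w ! i \<and> last_occurrence w j}
         + card {d \<in> WC_des w. d \<le> i} = w ! i - 1"
proof -
  let ?T = "{j. i < j \<and> j < length w \<and> w ! j < w ! i \<and> last_occurrence w j}"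
  let ?B = "{j. j < i \<and> last_occurrence w j}"
  have below: "w ! j < w ! i" if "j < i" "last_occurrence w j" for j
  proof -
    have "w ! i \<noteq> w ! j" using that assms(2) by (simp add: last_occurrence_iff)
    then show ?thesis using that assms(3) by (simp add: order_less_le)
  qed
  have "{j. j < length w \<and> last_occurrence w j \<and> w ! j < w ! i} = ?T \<union> ?B"
  proof (rule set_eqI)
    fix j show "j \<in> {j. j < length w \<and> last_occurrence w j \<and> w ! j < w ! i} \<longleftrightarrow> j \<in> ?T \<union> ?B"
      using assms(2) below by (cases j i rule: linorder_cases) auto
  qed
  moreover have "{b \<in> set w. b < w ! i} = {1..<w ! i}" using assms(1,2) nth_mem[of i w] by auto
  then have "card {j. j < length w \<and> last_occurrence w j \<and> w ! j < w ! i} = w ! i - 1"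
    by (simp add: card_last_occurrences_below)
  moreover have "Suc ` ?B = {d \<in> WC_des w. d \<le> i}"
  proof (rule set_eqI)
    fix d show "d \<in> Suc ` ?B \<longleftrightarrow> d \<in> {d \<in> WC_des w. d \<le> i}"
      using assms(2) WC_des_subset[of w] by (cases d) (auto simp: Suc_mem_WC_des)
  qed
  then have "card ?B = card {d \<in> WC_des w. d \<le> i}" using card_image[of Suc ?B] by simp
  moreover have "?T \<inter> ?B = {}" by auto
  ultimately show ?thesis by (simp add: card_Un_disjoint)
qed

lemma sinv_append_sorted_eq_sum:
  assumes "sorted u" "sorted v" "set (u @ v) = {1..r}"
  shows "int (sinv (u @ v))
           = (\<Sum>i<length u. int (u ! i) - int (Suc (card {d \<in> WC_des (u @ v). d \<le> i})))"
  unfolding sinv_append_sorted[OF assms(2)] of_nat_sum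
proof (rule sum.cong)
  fix i assume i: "i \<in> {..<length u}"
  then have "\<forall>j<i. (u @ v) ! j \<le> (u @ v) ! i" using assms(1) by (simp add: nth_append sorted_nth_mono)
  then have "card {j. i < j \<and> j < length (u @ v) \<and> (u @ v) ! j < u ! i \<and> last_occurrence (u @ v) j}
             + card {d \<in> WC_des (u @ v). d \<le> i} = u ! i - 1"
    using card_inversions_at[OF assms(3), of i] i by (simp add: nth_append)
  moreover have "u ! i \<ge> 1" using assms(3) i nth_mem[of i u] by auto
  ultimately show "int (card {j. i < j \<and> j < length (u @ v) \<and> (u @ v) ! j < u ! i \<and> last_occurrence (u @ v) j})
      = int (u ! i) - int (Suc (card {d \<in> WC_des (u @ v). d \<le> i}))" by linarith
qed simp

lemma sum_ywords_prefix:
  assumes "is_composition I n" "1 \<le> k" "k \<le> n"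
  shows "(\<Sum>i<k. ywords I ! i) = k + maj (rev (comp_of_des k (Des I \<inter> {1..k-1})))"
proof -
  define K where "K = comp_of_des k (Des I \<inter> {1..k-1})"
  have pos: "\<forall>x\<in>set I. x > 0" and sum: "sum_list I = n" using assms(1) by (auto simp: is_composition_def)
  have "Des I \<inter> {1..k-1} \<subseteq> {1..<k}" using assms(2) by auto
  note K = comp_of_des_correct[OF this assms(2), folded K_def]
  have "ywords K ! i = ywords I ! i" if "i < k" for i
  proof -
    have "{d \<in> Des I \<inter> {1..k-1}. d \<le> i} = {d \<in> Des I. d \<le> i}"
      using that Des_subset[OF pos] by auto
    then show ?thesis using ywords_nth[OF pos] ywords_nth[OF K(3)] K(1,2) that assms(3) sum by simp
  qed
  then have "(\<Sum>i<k. ywords I ! i) = sum_list (ywords K)"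
    using K(1) by (simp add: sum_list_sum_nth length_ywords atLeast0LessThan)
  then show ?thesis using sum_list_ywords[of K] K(1) by (simp add: K_def)
qed

lemma sorted_suffix_exists_iff:
  assumes "sorted u" "u \<noteq> []" "set u \<subseteq> {1..r}" "is_composition I n" "length I = r" "length u \<le> n"
  shows "(\<exists>v. sorted v \<and> length (u @ v) = n \<and> set (u @ v) = {1..r} \<and> WC_des (u @ v) = Des I)
           \<longleftrightarrow> (\<forall>d\<in>Des I. d < length u \<longrightarrow> u ! (d - 1) < u ! d)"
proof
  assume "\<exists>v. sorted v \<and> length (u @ v) = n \<and> set (u @ v) = {1..r} \<and> WC_des (u @ v) = Des I"
  then show "\<forall>d\<in>Des I. d < length u \<longrightarrow> u ! (d - 1) < u ! d"
    using sorted_prefix_ascends_at_WC_des[OF assms(1)] by blast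
next
  assume ascends: "\<forall>d\<in>Des I. d < length u \<longrightarrow> u ! (d - 1) < u ! d"
  have pos: "\<forall>x\<in>set I. x > 0" and sum: "sum_list I = n" using assms(4) by (auto simp: is_composition_def)
  have "card (Des I) = r - 1" using card_Des[OF pos] assms(5) by simp
  then obtain v where "sorted v" "length (u @ v) = n" "set (u @ v) = {1..r}" "WC_des (u @ v) = Des I"
    by (rule sorted_suffix_exists[OF assms(1-3) Des_subset[OF pos, unfolded sum] _ assms(6) ascends])
  then show "\<exists>v. sorted v \<and> length (u @ v) = n \<and> set (u @ v) = {1..r} \<and> WC_des (u @ v) = Des I"
    by blast
qed

lemma sinv_append_sorted_eq_ywords:
  assumes "is_composition I n" "sorted u" "sorted v" "set (u @ v) = {1..r}" "WC_des (u @ v) = Des I"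
    "length u \<le> n"
  shows "int (sinv (u @ v)) = (\<Sum>i<length u. int (u ! i) - int (ywords I ! i))"
proof -
  have "ywords I ! i = Suc (card {d \<in> WC_des (u @ v). d \<le> i})" if "i < length u" for i
    using ywords_nth[of I i] assms(1,5,6) that by (simp add: is_composition_def)
  then show ?thesis using sinv_append_sorted_eq_sum[OF assms(2-4)] by simp
qed

lemma sinv_append_sorted_eq_maj:
  assumes "is_composition I n" "sorted u" "sorted v" "set (u @ v) = {1..r}" "WC_des (u @ v) = Des I"
    "1 \<le> length u" "length u \<le> n"
  shows "int (sinv (u @ v))
           = int (sum_list u) - int (length u + maj (rev (comp_of_des (length u) (Des I \<inter> {1..length u - 1}))))"
proof -
  have "int (sinv (u @ v)) = int (sum_list u) - int (\<Sum>i<length u. ywords I ! i)"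
    using sinv_append_sorted_eq_ywords[OF assms(1-5,7)]
    by (simp add: sum_subtractf sum_list_sum_nth atLeast0LessThan)
  then show ?thesis by (simp only: sum_ywords_prefix[OF assms(1,6,7)])
qed

theorem mainTheorem16:
  fixes u I :: "nat list" and k r n :: nat
  assumes "length u = k" and "k \<ge> 1" and "sorted u" and "set u \<subseteq> {1..r}"
    and "is_composition I n" and "length I = r" and "n \<ge> k"
  shows "(\<forall>v1 v2. (sorted v1 \<and> set v1 \<subseteq> {1..r} \<and> packed (u @ v1) \<and> WC (u @ v1) = I)
              \<longrightarrow> (sorted v2 \<and> set v2 \<subseteq> {1..r} \<and> packed (u @ v2) \<and> WC (u @ v2) = I)
              \<longrightarrow> v1 = v2)
       \<and> ((\<exists>v. sorted v \<and> set v \<subseteq> {1..r} \<and> packed (u @ v) \<and> WC (u @ v) = I)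
           \<longleftrightarrow> (\<forall>i\<in>Des I. i \<le> k - 1 \<longrightarrow> u ! (i - 1) < u ! i))
       \<and> (\<forall>v. sorted v \<and> set v \<subseteq> {1..r} \<and> packed (u @ v) \<and> WC (u @ v) = I \<longrightarrow>
             int (sinv (u @ v)) = (\<Sum>i<k. int (u ! i) - int (ywords I ! i))
           \<and> int (sinv (u @ v)) = int (sum_list u)
                 - int (k + maj (rev (comp_of_des k (Des I \<inter> {1..k-1})))))"
proof -
  have "u \<noteq> []" using assms(1,2) by auto
  have suffix_iff: "sorted v \<and> set v \<subseteq> {1..r} \<and> packed (u @ v) \<and> WC (u @ v) = I \<longleftrightarrow>
      sorted v \<and> length (u @ v) = n \<and> set (u @ v) = {1..r} \<and> WC_des (u @ v) = Des I" for v
    using packed_WC_eq_iff[OF assms(5,6), of "u @ v"] \<open>u \<noteq> []\<close> by auto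
  have ascends_iff: "(\<forall>i\<in>Des I. i \<le> k - 1 \<longrightarrow> u ! (i - 1) < u ! i)
      \<longleftrightarrow> (\<forall>d\<in>Des I. d < length u \<longrightarrow> u ! (d - 1) < u ! d)"
    using assms(1,2) by (auto simp: less_Suc_eq_le)
  have "length u \<le> n" using assms(1,7) by simp
  note exists_iff = sorted_suffix_exists_iff[OF assms(3) \<open>u \<noteq> []\<close> assms(4-6) this]
  show ?thesis
    unfolding suffix_iff ascends_iff exists_iff
  proof (intro conjI allI impI refl, goal_cases)
    case (1 v1 v2)
    then show ?case by (intro sorted_suffix_unique[of v1 v2 u]) auto
  next
    case (2 v)
    then show ?case using sinv_append_sorted_eq_ywords[OF assms(5,3), of v r] assms(1) \<open>length u \<le> n\<close> by blast
  next
    case (3 v)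
    then show ?case using sinv_append_sorted_eq_maj[OF assms(5,3), of v r] assms(1,2) \<open>length u \<le> n\<close> by blast
  qed
qed

end
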